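(* An expanding map $\varphi:X\to X$ on a compact metrizable space $X$ is topologically free if and only if $X$ has no isolated points that are periodic for $\varphi$.
   Context: Expanding: there are a compatible metric $d$ and $\varepsilon>0,\theta>1$ with $d(\varphi x,\varphi y)\ge\theta d(x,y)$ whenever $d(x,y)<\varepsilon$. Topologically free: the set $\{x:\varphi^n(x)=x$ for some $n\ge1\}$ has empty interior. *)

theory Defs
  imports "HOL-Analysis.Analysis"
begin

definition expanding_map :: "'a topology \<Rightarrow> ('a \<Rightarrow> 'a) \<Rightarrow> bool" where
  "expanding_map X \<phi> \<longleftrightarrow>
     (\<exists>d. Metric_space (topspace X) d \<and> Metric_space.mtopology (topspace X) d = X \<and>
       (\<exists>\<epsilon>>0. \<exists>\<theta>>1. \<forall>x\<in>topspace X. \<forall>y\<in>topspace X.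
          d x y < \<epsilon> \<longrightarrow> d (\<phi> x) (\<phi> y) \<ge> \<theta> * d x y))"

definition periodic_point :: "('a \<Rightarrow> 'a) \<Rightarrow> 'a \<Rightarrow> bool" where
  "periodic_point \<phi> x \<longleftrightarrow> (\<exists>n\<ge>1. (\<phi> ^^ n) x = x)"

definition topologically_free :: "'a topology \<Rightarrow> ('a \<Rightarrow> 'a) \<Rightarrow> bool" where
  "topologically_free X \<phi> \<longleftrightarrow>
     X interior_of {x \<in> topspace X. periodic_point \<phi> x} = {}"

end

theory Submission
  imports Defs
begin

text \<open>If the periodic points of \<phi> had nonempty interior, then by the Baire category theorem
  (a compact metrizable space is completely metrizable) the closed set of fixed points of some
  iterate \<phi>^m would contain a nonempty open set V. For x \<in> V, the points y \<in> V whose first m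
  orbit points stay \<epsilon>-close to those of x form an open neighbourhood of x; expansion gives
  d x y = d (\<phi>^m x) (\<phi>^m y) \<ge> \<theta>^m d x y, so d x y = 0 and x is an isolated periodic point.
  The converse is immediate: an isolated periodic point is an open set of periodic points.\<close>

lemma continuous_map_funpow:
  assumes "continuous_map X X f"
  shows "continuous_map X X (f ^^ n)"
  by (induction n) (auto intro: continuous_map_compose[OF _ assms] simp del: comp_apply)

lemma funpow_in_topspace:
  assumes "continuous_map X X f" "x \<in> topspace X"
  shows "(f ^^ n) x \<in> topspace X"
  using continuous_map_funpow[OF assms(1)] assms(2) continuous_map_image_subset_topspace by blast

lemma (in Metric_space) funpow_expanding:
  assumes f_M: "f ` M \<subseteq> M" and "x \<in> M" "y \<in> M" and "\<theta> \<ge> 0"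
    and expanding: "\<forall>x\<in>M. \<forall>y\<in>M. d x y < \<epsilon> \<longrightarrow> d (f x) (f y) \<ge> \<theta> * d x y"
    and close: "\<And>j. j < n \<Longrightarrow> d ((f ^^ j) x) ((f ^^ j) y) < \<epsilon>"
  shows "d ((f ^^ n) x) ((f ^^ n) y) \<ge> \<theta> ^ n * d x y"
  using close
proof (induction n)
  case 0
  then show ?case by simp
next
  case (Suc n)
  have orbits_M: "(f ^^ n) x \<in> M" "(f ^^ n) y \<in> M"
    using f_M \<open>x \<in> M\<close> \<open>y \<in> M\<close> by (induction n) auto
  have "\<theta> ^ Suc n * d x y \<le> \<theta> * d ((f ^^ n) x) ((f ^^ n) y)"
    using Suc \<open>\<theta> \<ge> 0\<close> by (simp add: mult.assoc mult_left_mono)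
  also have "\<dots> \<le> d ((f ^^ Suc n) x) ((f ^^ Suc n) y)"
    using expanding orbits_M Suc.prems[of n] by simp
  finally show ?case .
qed

lemma (in Metric_space) funpow_expanding_fixpoints_eq:
  assumes "f ` M \<subseteq> M" and "x \<in> M" "y \<in> M" and "\<theta> > 1" and "m \<ge> 1"
    and "\<forall>x\<in>M. \<forall>y\<in>M. d x y < \<epsilon> \<longrightarrow> d (f x) (f y) \<ge> \<theta> * d x y"
    and "\<And>j. j < m \<Longrightarrow> d ((f ^^ j) x) ((f ^^ j) y) < \<epsilon>"
    and "(f ^^ m) x = x" "(f ^^ m) y = y"
  shows "x = y"
proof -
  have "\<theta> ^ m * d x y \<le> d x y"
    using funpow_expanding[of f x y \<theta> \<epsilon> m] assms by simp
  then have "(\<theta> ^ m - 1) * d x y \<le> 0"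
    by (simp add: algebra_simps)
  moreover have "\<theta> ^ m > 1"
    using assms(4,5) by (simp add: one_less_power)
  ultimately have "d x y \<le> 0"
    by (simp add: mult_le_0_iff)
  then show "x = y"
    using nonneg[of x y] assms(2,3) by simp
qed

lemma expanding_map_isolated_in_open_periodic:
  assumes cont: "continuous_map X X \<phi>" and "expanding_map X \<phi>"
    and "openin X V" and V_fixed: "\<And>y. y \<in> V \<Longrightarrow> (\<phi> ^^ m) y = y" and "m \<ge> 1"
    and "x \<in> V"
  shows "openin X {x}"
proof -
  obtain d \<epsilon> \<theta> where ms: "Metric_space (topspace X) d"
    and mtop: "Metric_space.mtopology (topspace X) d = X"
    and "\<epsilon> > 0" and "\<theta> > 1"
    and expanding: "\<forall>x\<in>topspace X. \<forall>y\<in>topspace X. d x y < \<epsilon> \<longrightarrow> d (\<phi> x) (\<phi> y) \<ge> \<theta> * d x y"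
    using \<open>expanding_map X \<phi>\<close> unfolding expanding_map_def by blast
  interpret Metric_space "topspace X" d by (rule ms)
  have V_X: "V \<subseteq> topspace X"
    using \<open>openin X V\<close> openin_subset by blast
  define W where
    "W = V \<inter> (\<Inter>j<m. {y \<in> topspace X. (\<phi> ^^ j) y \<in> mball ((\<phi> ^^ j) x) \<epsilon>})"
  have "openin X W"
    unfolding W_def
  proof (intro openin_Int \<open>openin X V\<close> openin_INT2)
    fix j
    show "openin X {y \<in> topspace X. (\<phi> ^^ j) y \<in> mball ((\<phi> ^^ j) x) \<epsilon>}"
      using openin_continuous_map_preimage[OF continuous_map_funpow[OF cont]] openin_mball mtop
      by metis
  qed (use \<open>m \<ge> 1\<close> in \<open>auto simp: lessThan_empty_iff\<close>)
  moreover have "W = {x}"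
  proof (intro equalityI subsetI)
    show "x' \<in> W" if "x' \<in> {x}" for x'
      using that \<open>x \<in> V\<close> V_X funpow_in_topspace[OF cont] \<open>\<epsilon> > 0\<close> by (auto simp: W_def)
  next
    fix y assume "y \<in> W"
    then have "y \<in> V" by (simp add: W_def)
    have "x = y"
    proof (rule funpow_expanding_fixpoints_eq)
      show "\<phi> ` topspace X \<subseteq> topspace X"
        using cont continuous_map_image_subset_topspace by blast
      show "d ((\<phi> ^^ j) x) ((\<phi> ^^ j) y) < \<epsilon>" if "j < m" for j
        using \<open>y \<in> W\<close> that by (auto simp: W_def)
    qed (use \<open>x \<in> V\<close> \<open>y \<in> V\<close> V_X V_fixed \<open>\<theta> > 1\<close> \<open>m \<ge> 1\<close> expanding in auto)
    then show "y \<in> {x}" by simp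
  qed
  ultimately show ?thesis by simp
qed

lemma periodic_points_eq_UN_fixpoints:
  "{x \<in> topspace X. periodic_point \<phi> x} = (\<Union>n. {x \<in> topspace X. (\<phi> ^^ Suc n) x = x})"
proof -
  have "periodic_point \<phi> x \<longleftrightarrow> (\<exists>n. (\<phi> ^^ Suc n) x = x)" for x
    unfolding periodic_point_def by (auto dest: Suc_le_D simp del: funpow.simps)
  then show ?thesis by blast
qed

lemma interior_of_fixpoints_funpow_nonempty:
  assumes "completely_metrizable_space X" and "continuous_map X X \<phi>"
    and "X interior_of {x \<in> topspace X. periodic_point \<phi> x} \<noteq> {}"
  shows "\<exists>n. X interior_of {x \<in> topspace X. (\<phi> ^^ Suc n) x = x} \<noteq> {}"
proof (rule ccontr)
  assume no_interior: "\<nexists>n. X interior_of {x \<in> topspace X. (\<phi> ^^ Suc n) x = x} \<noteq> {}"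
  have "Hausdorff_space X"
    using assms(1) completely_metrizable_imp_metrizable_space metrizable_imp_Hausdorff_space
    by blast
  then have "closedin X {x \<in> topspace X. (\<phi> ^^ Suc n) x = id x}" for n
    using closedin_continuous_maps_eq continuous_map_funpow[OF assms(2)] continuous_map_id
    by blast
  with no_interior have "X interior_of (\<Union>n. {x \<in> topspace X. (\<phi> ^^ Suc n) x = x}) = {}"
    using assms(1) by (intro Baire_category_alt) auto
  with assms(3) show False
    by (simp add: periodic_points_eq_UN_fixpoints)
qed

lemma isolated_periodic_point_not_topologically_free:
  assumes "openin X {x}" and "x \<in> topspace X" and "periodic_point \<phi> x"
  shows "\<not> topologically_free X \<phi>"
proof -
  have "{x} \<subseteq> X interior_of {x \<in> topspace X. periodic_point \<phi> x}"
    using assms by (intro interior_of_maximal) auto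
  then show ?thesis
    by (auto simp: topologically_free_def)
qed

lemma expanding_map_not_topologically_free_imp_isolated_periodic_point:
  assumes "completely_metrizable_space X" and cont: "continuous_map X X \<phi>"
    and "expanding_map X \<phi>" and "\<not> topologically_free X \<phi>"
  obtains x where "x \<in> topspace X" "openin X {x}" "periodic_point \<phi> x"
proof -
  obtain n where "X interior_of {x \<in> topspace X. (\<phi> ^^ Suc n) x = x} \<noteq> {}"
    using interior_of_fixpoints_funpow_nonempty[OF assms(1) cont] assms(4)
    unfolding topologically_free_def by blast
  then obtain x where x: "x \<in> X interior_of {x \<in> topspace X. (\<phi> ^^ Suc n) x = x}"
    by blast
  then have fixed: "x \<in> topspace X" "(\<phi> ^^ Suc n) x = x"
    using interior_of_subset by fastforce+
  have "openin X {x}"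
    using x interior_of_subset[of X "{x \<in> topspace X. (\<phi> ^^ Suc n) x = x}"]
    by (intro expanding_map_isolated_in_open_periodic[OF cont \<open>expanding_map X \<phi>\<close>
          openin_interior_of, of _ "Suc n"]) (auto simp del: funpow.simps)
  moreover have "periodic_point \<phi> x"
    unfolding periodic_point_def using fixed(2) by (intro exI[of _ "Suc n"]) simp
  ultimately show thesis
    using that fixed(1) by blast
qed

theorem mainTheorem19:
  fixes X :: "'a topology" and \<phi> :: "'a \<Rightarrow> 'a"
  assumes "compact_space X" and "metrizable_space X"
    and "continuous_map X X \<phi>"
    and "expanding_map X \<phi>"
  shows "topologically_free X \<phi> \<longleftrightarrow>
         \<not> (\<exists>x\<in>topspace X. openin X {x} \<and> periodic_point \<phi> x)"
proof -
  have "completely_metrizable_space X"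
    by (simp add: assms(1,2) compact_imp_locally_compact_space
        locally_compact_imp_completely_metrizable_space)
  then show ?thesis
    using isolated_periodic_point_not_topologically_free
      expanding_map_not_topologically_free_imp_isolated_periodic_point[OF _ assms(3,4)]
    by metis
qed

end
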